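(* Let $n\le l$ be positive integers, let $L_l=\{a_1<a_2<\dots<a_l\}$ be the linearly ordered semilattice of $l$ elements (with $a_ia_j=a_{\min(i,j)}$), and let $t(X)=s(X)$ be an equation over $L_l$ in the variables $X=\{x_1,\dots,x_n\}$ in which every variable $x_1,\dots,x_n$ occurs. Let $\sigma$ be a permutation of $\{1,\dots,n\}$ of the first or of the second kind with respect to this equation. Then the set $Y_\sigma\subseteq L_l^n$ is irreducible, and its coordinate semilattice satisfies $\Gamma(Y_\sigma)\cong L_n$ if $\sigma$ is of the first kind and $\Gamma(Y_\sigma)\cong L_{n-1}$ if $\sigma$ is of the second kind.
   Context: A term $t(X)$ is a commutative word in the letters $x_1,\dots,x_n$; $\mathrm{Var}(t)$ is the set of variables occurring in $t$. An equation is an ordered pair of terms written $t(X)=s(X)$; an inequality $t\le s$ abbreviates the equation $ts=t$. A point $P\in L_l^n$ is a solution of $t(X)=s(X)$ if $t(P)=s(P)$ in $L_l$. For a system $S$ of equations, $V(S)$ is the set of common solutions; a set $Y\subseteq L_l^n$ is algebraic if $Y=V(S)$ for some system $S$, and an algebraic set is irreducible if it is not a proper finite union of other algebraic sets. For an algebraic set $Y$, terms $t,s$ are $\sim_Y$-equivalent if $t(P)=s(P)$ for all $P\in Y$; the set of equivalence classes, with the induced multiplication, is the coordinate semilattice $\Gamma(Y)$. A permutation $\sigma$ of $\{1,\dots,n\}$ is of the first kind (for the equation $t=s$) if $x_{\sigma(1)}\in\mathrm{Var}(t)\cap\mathrm{Var}(s)$, and of the second kind if $x_{\sigma(1)}\in\mathrm{Var}(s)\setminus\mathrm{Var}(t)$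 and $x_{\sigma(2)}\in\mathrm{Var}(t)\setminus\mathrm{Var}(s)$. If $\sigma$ is of the first kind, $Y_\sigma=V(\{x_{\sigma(i)}\le x_{\sigma(i+1)}: 1\le i\le n-1\})$; if $\sigma$ is of the second kind, $Y_\sigma=V(\{x_{\sigma(1)}=x_{\sigma(2)}\}\cup\{x_{\sigma(i)}\le x_{\sigma(i+1)}: 2\le i\le n-1\})$. *)

theory Defs
  imports Main "HOL-Library.Multiset" "HOL-Combinatorics.Permutations"
begin

text \<open>Variables are x_0,...,x_(n-1) (0-indexed).  A wterm (commutative word) is a
  nonempty multiset of variable indices.  L_l = {a_1<...<a_l} is modelled by
  {0..<l} :: nat set with product min.  A point of L_l^n is a list of length n
  with entries < l.\<close>

type_synonym wterm = "nat multiset"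
type_synonym equation = "wterm \<times> wterm"

definition terms :: "nat \<Rightarrow> wterm set" where
  "terms n = {t. t \<noteq> {#} \<and> set_mset t \<subseteq> {0..<n}}"

definition Var :: "wterm \<Rightarrow> nat set" where
  "Var t = set_mset t"

definition points :: "nat \<Rightarrow> nat \<Rightarrow> nat list set" where
  "points n l = {P. length P = n \<and> (\<forall>a\<in>set P. a < l)}"

definition eval :: "wterm \<Rightarrow> nat list \<Rightarrow> nat" where
  "eval t P = Min ((\<lambda>i. P ! i) ` set_mset t)"

text \<open>inequality t \<le> s abbreviates ts = t\<close>
definition ineq :: "wterm \<Rightarrow> wterm \<Rightarrow> equation" where
  "ineq t s = (t + s, t)"

definition V :: "nat \<Rightarrow> nat \<Rightarrow> equation set \<Rightarrow> nat list set" where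
  "V n l S = {P \<in> points n l. \<forall>(t, s)\<in>S. eval t P = eval s P}"

definition algebraic :: "nat \<Rightarrow> nat \<Rightarrow> nat list set \<Rightarrow> bool" where
  "algebraic n l Y \<longleftrightarrow> (\<exists>S. S \<subseteq> terms n \<times> terms n \<and> Y = V n l S)"

definition irreducible_alg :: "nat \<Rightarrow> nat \<Rightarrow> nat list set \<Rightarrow> bool" where
  "irreducible_alg n l Y \<longleftrightarrow> algebraic n l Y \<and>
     \<not> (\<exists>F. finite F \<and> (\<forall>Z\<in>F. algebraic n l Z \<and> Z \<noteq> Y) \<and> Y = \<Union>F)"

definition simY :: "nat \<Rightarrow> nat list set \<Rightarrow> (wterm \<times> wterm) set" where
  "simY n Y = {(t, s). t \<in> terms n \<and> s \<in> terms n \<and> (\<forall>P\<in>Y. eval t P = eval s P)}"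

definition Gamma :: "nat \<Rightarrow> nat list set \<Rightarrow> wterm set set" where
  "Gamma n Y = terms n // simY n Y"

definition Gamma_mult :: "nat \<Rightarrow> nat list set \<Rightarrow> wterm set \<Rightarrow> wterm set \<Rightarrow> wterm set" where
  "Gamma_mult n Y A B = (\<Union>a\<in>A. \<Union>b\<in>B. simY n Y `` {a + b})"

definition Gamma_iso_L :: "nat \<Rightarrow> nat list set \<Rightarrow> nat \<Rightarrow> bool" where
  "Gamma_iso_L n Y m \<longleftrightarrow> (\<exists>f. bij_betw f (Gamma n Y) {0..<m} \<and>
     (\<forall>A\<in>Gamma n Y. \<forall>B\<in>Gamma n Y. f (Gamma_mult n Y A B) = min (f A) (f B)))"

definition first_kind :: "equation \<Rightarrow> (nat \<Rightarrow> nat) \<Rightarrow> bool" where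
  "first_kind e \<sigma> \<longleftrightarrow> \<sigma> 0 \<in> Var (fst e) \<inter> Var (snd e)"

definition second_kind :: "equation \<Rightarrow> (nat \<Rightarrow> nat) \<Rightarrow> bool" where
  "second_kind e \<sigma> \<longleftrightarrow> \<sigma> 0 \<in> Var (snd e) - Var (fst e) \<and> \<sigma> 1 \<in> Var (fst e) - Var (snd e)"

definition Y_first :: "nat \<Rightarrow> nat \<Rightarrow> (nat \<Rightarrow> nat) \<Rightarrow> nat list set" where
  "Y_first n l \<sigma> = V n l {ineq {#\<sigma> i#} {#\<sigma> (Suc i)#} | i. i + 1 < n}"

definition Y_second :: "nat \<Rightarrow> nat \<Rightarrow> (nat \<Rightarrow> nat) \<Rightarrow> nat list set" where
  "Y_second n l \<sigma> = V n l ({({#\<sigma> 0#}, {#\<sigma> 1#})} \<union>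
      {ineq {#\<sigma> i#} {#\<sigma> (Suc i)#} | i. 1 \<le> i \<and> i + 1 < n})"

end

theory Submission
  imports Defs
begin

text \<open>Both sets are chains \<open>x_\<sigma>(0) = \<dots> = x_\<sigma>(d) \<le> x_\<sigma>(d+1) \<le> \<dots> \<le> x_\<sigma>(n-1)\<close>, with \<open>d = 0\<close>
  for the first kind and \<open>d = 1\<close> for the second; the equation itself only matters in that a
  permutation of the second kind forces \<open>n \<ge> 2\<close>. Such a set \<open>Y\<close> has a generic point \<open>g\<close>, namely
  \<open>g(x_\<sigma>(i)) = max(i - d, 0)\<close>: every point of \<open>Y\<close> is obtained from \<open>g\<close> by applying a monotone
  map coordinatewise, and monotone maps are semilattice endomorphisms of a chain. Hence every
  equation true at \<open>g\<close> holds on all of \<open>Y\<close>. This makes \<open>Y\<close> irreducible (a finite cover of \<open>Y\<close>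
  by algebraic sets has a member containing \<open>g\<close>, and that member contains \<open>Y\<close>), and it
  identifies \<open>\<Gamma>(Y)\<close> with the set of values of terms at \<open>g\<close>, which is the chain
  \<open>{0, \<dots>, n - d - 1}\<close>.\<close>

lemma eval_singleton [simp]: "eval {#a#} P = P ! a"
  by (simp add: eval_def)

lemma eval_plus:
  assumes "t \<noteq> {#}" "s \<noteq> {#}"
  shows "eval (t + s) P = min (eval t P) (eval s P)"
  using assms by (simp add: eval_def image_Un Min_Un)

lemma eval_pair [simp]: "eval {#a, b#} P = min (P ! a) (P ! b)"
  by (simp add: eval_def)

lemma eval_attained:
  assumes "t \<noteq> {#}"
  obtains j where "j \<in># t" "eval t P = P ! j"
proof -
  have "eval t P \<in> (!) P ` set_mset t"
    unfolding eval_def using assms by (intro Min_in) auto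
  then show ?thesis using that by blast
qed

lemma eval_mono_comp:
  assumes "t \<noteq> {#}" "mono \<phi>" "\<And>j. j \<in># t \<Longrightarrow> P ! j = \<phi> (g ! j)"
  shows "eval t P = \<phi> (eval t g)"
proof -
  have "\<phi> (eval t g) = Min (\<phi> ` (!) g ` set_mset t)"
    unfolding eval_def using assms(1) by (intro mono_Min_commute[OF assms(2)]) auto
  also have "\<phi> ` (!) g ` set_mset t = (!) P ` set_mset t"
    using assms(3) by (force simp: image_image)
  finally show ?thesis by (simp add: eval_def)
qed

lemma plus_in_terms: "t \<in> terms n \<Longrightarrow> s \<in> terms n \<Longrightarrow> t + s \<in> terms n"
  by (auto simp: terms_def)

definition generic_point :: "nat \<Rightarrow> nat list set \<Rightarrow> nat list \<Rightarrow> bool" where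
  "generic_point n Y g \<longleftrightarrow> g \<in> Y \<and>
     (\<forall>P\<in>Y. \<forall>t\<in>terms n. \<forall>s\<in>terms n. eval t g = eval s g \<longrightarrow> eval t P = eval s P)"

lemma generic_pointI_mono_factor:
  assumes "g \<in> Y"
    and factor: "\<And>P. P \<in> Y \<Longrightarrow> \<exists>\<phi>. mono \<phi> \<and> (\<forall>j<n. P ! j = \<phi> (g ! j))"
  shows "generic_point n Y g"
  unfolding generic_point_def
proof (intro conjI ballI impI \<open>g \<in> Y\<close>)
  fix P t s assume "P \<in> Y" "t \<in> terms n" "s \<in> terms n" "eval t g = eval s g"
  moreover obtain \<phi> where "mono \<phi>" "\<forall>j<n. P ! j = \<phi> (g ! j)"
    using factor[OF \<open>P \<in> Y\<close>] by blast
  then have "\<And>u. u \<in> terms n \<Longrightarrow> eval u P = \<phi> (eval u g)"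
    by (intro eval_mono_comp) (auto simp: terms_def)
  then show "eval t P = eval s P"
    using \<open>t \<in> terms n\<close> \<open>s \<in> terms n\<close> \<open>eval t g = eval s g\<close> by metis
qed

lemma irreducible_if_generic_point:
  assumes "algebraic n l Y" "generic_point n Y g"
  shows "irreducible_alg n l Y"
  unfolding irreducible_alg_def
proof (intro conjI \<open>algebraic n l Y\<close> notI)
  assume "\<exists>F. finite F \<and> (\<forall>Z\<in>F. algebraic n l Z \<and> Z \<noteq> Y) \<and> Y = \<Union>F"
  then obtain F where F: "\<forall>Z\<in>F. algebraic n l Z \<and> Z \<noteq> Y" "Y = \<Union>F" by blast
  moreover have "g \<in> Y" using assms(2) by (simp add: generic_point_def)
  ultimately obtain Z where Z: "Z \<in> F" "g \<in> Z" by blast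
  then obtain S where S: "S \<subseteq> terms n \<times> terms n" "Z = V n l S"
    using F(1) unfolding algebraic_def by blast
  obtain S\<^sub>Y where "Y = V n l S\<^sub>Y" using assms(1) by (auto simp: algebraic_def)
  then have "Y \<subseteq> points n l" by (auto simp: V_def)
  have "Y \<subseteq> Z"
  proof
    fix P assume "P \<in> Y"
    have "eval t P = eval s P" if "(t, s) \<in> S" for t s
    proof -
      have "eval t g = eval s g" using that S(2) Z(2) by (auto simp: V_def)
      then show ?thesis
        using assms(2) \<open>P \<in> Y\<close> that S(1) unfolding generic_point_def by blast
    qed
    then show "P \<in> Z" using S(2) \<open>P \<in> Y\<close> \<open>Y \<subseteq> points n l\<close> by (auto simp: V_def)
  qed
  moreover have "Z \<subseteq> Y" using F(2) Z(1) by blast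
  ultimately show False using F(1) Z(1) by blast
qed

lemma simY_class_generic_point:
  assumes "generic_point n Y g" "c \<in> terms n"
  shows "simY n Y `` {c} = {t \<in> terms n. eval t g = eval c g}"
proof -
  have "(\<forall>P\<in>Y. eval c P = eval t P) \<longleftrightarrow> eval t g = eval c g" if "t \<in> terms n" for t
    using assms that unfolding generic_point_def by metis
  then show ?thesis using assms(2) by (auto simp: simY_def)
qed

lemma Gamma_mult_generic_point:
  assumes gen: "generic_point n Y g" and "a \<in> terms n" "b \<in> terms n"
  shows "Gamma_mult n Y (simY n Y `` {a}) (simY n Y `` {b}) = simY n Y `` {a + b}"
proof -
  note cls = simY_class_generic_point[OF gen]
  have "simY n Y `` {a' + b'} = simY n Y `` {a + b}"
    if "a' \<in> simY n Y `` {a}" "b' \<in> simY n Y `` {b}" for a' b'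
  proof -
    have "a' \<in> terms n" "b' \<in> terms n" "eval a' g = eval a g" "eval b' g = eval b g"
      using that assms(2,3) by (simp_all add: cls)
    then have "eval (a' + b') g = eval (a + b) g"
      using assms(2,3) by (simp add: eval_plus terms_def)
    then show ?thesis
      using \<open>a' \<in> terms n\<close> \<open>b' \<in> terms n\<close> assms(2,3) by (simp add: cls plus_in_terms)
  qed
  moreover have "a \<in> simY n Y `` {a}" "b \<in> simY n Y `` {b}"
    using assms(2,3) by (simp_all add: cls)
  ultimately show ?thesis unfolding Gamma_mult_def by blast
qed

lemma Gamma_iso_L_if_generic_point:
  assumes gen: "generic_point n Y g" and image_eval: "(\<lambda>t. eval t g) ` terms n = {0..<m}"
  shows "Gamma_iso_L n Y m"
proof -
  let ?cls = "\<lambda>a. simY n Y `` {a}"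
  note cls = simY_class_generic_point[OF gen]
  define f where "f A = the_elem ((\<lambda>t. eval t g) ` A)" for A
  have f_cls: "f (?cls a) = eval a g" if "a \<in> terms n" for a
  proof -
    have "(\<lambda>t. eval t g) ` ?cls a = {eval a g}"
      using that by (auto simp: cls)
    then show ?thesis by (simp add: f_def)
  qed
  have Gamma: "Gamma n Y = ?cls ` terms n"
    by (auto simp: Gamma_def quotient_def)
  have "inj_on f (Gamma n Y)"
  proof (rule inj_onI)
    fix A B assume "A \<in> Gamma n Y" "B \<in> Gamma n Y" "f A = f B"
    then obtain a b where "a \<in> terms n" "b \<in> terms n" "A = ?cls a" "B = ?cls b"
      "eval a g = eval b g"
      unfolding Gamma by (auto simp: f_cls)
    then show "A = B" by (simp add: cls)
  qed
  moreover have "f ` Gamma n Y = {0..<m}"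
    unfolding Gamma image_image using image_eval f_cls by simp
  moreover have "f (Gamma_mult n Y A B) = min (f A) (f B)"
    if AB: "A \<in> Gamma n Y" "B \<in> Gamma n Y" for A B
  proof -
    obtain a b where "a \<in> terms n" "b \<in> terms n" "A = ?cls a" "B = ?cls b"
      using AB unfolding Gamma by blast
    then show ?thesis
      by (simp add: Gamma_mult_generic_point[OF gen] f_cls plus_in_terms eval_plus terms_def)
  qed
  ultimately show ?thesis
    unfolding Gamma_iso_L_def bij_betw_def by blast
qed

definition chain_points :: "nat \<Rightarrow> nat \<Rightarrow> (nat \<Rightarrow> nat) \<Rightarrow> nat \<Rightarrow> nat list set" where
  "chain_points n l \<sigma> d = {P \<in> points n l. (\<forall>i\<le>d. P ! \<sigma> i = P ! \<sigma> d) \<and>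
     (\<forall>i. d \<le> i \<and> Suc i < n \<longrightarrow> P ! \<sigma> i \<le> P ! \<sigma> (Suc i))}"

lemma chain_points_generic_point:
  assumes \<sigma>: "\<sigma> permutes {0..<n}" and "d < n" "n \<le> l + d"
  shows "generic_point n (chain_points n l \<sigma> d) (map (\<lambda>j. inv \<sigma> j - d) [0..<n])"
    (is "generic_point n ?Y ?g")
proof (rule generic_pointI_mono_factor)
  have \<sigma>_lt: "\<sigma> i < n" if "i < n" for i
    using permutes_in_image[OF \<sigma>] that by simp
  have inv_lt: "inv \<sigma> j < n" if "j < n" for j
    using permutes_in_image[OF permutes_inv[OF \<sigma>]] that by simp
  note inverses = permutes_inverses[OF \<sigma>]
  have g_\<sigma>: "?g ! \<sigma> i = i - d" if "i < n" for i
    using that by (simp add: \<sigma>_lt inverses)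
  have "?g \<in> points n l"
    unfolding points_def
  proof (intro CollectI conjI ballI)
    fix a assume "a \<in> set ?g"
    then obtain j where "j < n" "a = inv \<sigma> j - d" by auto
    then show "a < l" using inv_lt[of j] \<open>d < n\<close> \<open>n \<le> l + d\<close> by linarith
  qed simp
  then show "?g \<in> ?Y"
    using \<open>d < n\<close> by (auto simp: chain_points_def g_\<sigma>)
  fix P assume "P \<in> ?Y"
  then have eq: "\<And>i. i \<le> d \<Longrightarrow> P ! \<sigma> i = P ! \<sigma> d"
    and step: "\<And>i. d \<le> i \<Longrightarrow> Suc i < n \<Longrightarrow> P ! \<sigma> i \<le> P ! \<sigma> (Suc i)"
    unfolding chain_points_def by blast+
  define \<phi> where "\<phi> k = P ! \<sigma> (min (k + d) (n - 1))" for k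
  have "mono \<phi>"
  proof (rule mono_iff_le_Suc[THEN iffD2], rule allI)
    fix k show "\<phi> k \<le> \<phi> (Suc k)"
    proof (cases "k + d < n - 1")
      case True
      then show ?thesis using step[of "k + d"] by (simp add: \<phi>_def)
    qed (simp add: \<phi>_def)
  qed
  moreover have "P ! j = \<phi> (?g ! j)" if "j < n" for j
  proof -
    have "min (inv \<sigma> j - d + d) (n - 1) = max (inv \<sigma> j) d"
      using inv_lt[OF that] \<open>d < n\<close> by linarith
    then have "\<phi> (?g ! j) = P ! \<sigma> (max (inv \<sigma> j) d)"
      using that by (simp add: \<phi>_def)
    also have "\<dots> = P ! \<sigma> (inv \<sigma> j)"
      using eq[of "inv \<sigma> j"] by (simp add: max_def)
    finally show ?thesis by (simp add: inverses)
  qed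
  ultimately show "\<exists>\<phi>. mono \<phi> \<and> (\<forall>j<n. P ! j = \<phi> (?g ! j))" by blast
qed

lemma chain_points_generic_point_values:
  assumes \<sigma>: "\<sigma> permutes {0..<n}" and "d < n"
  shows "(\<lambda>t. eval t (map (\<lambda>j. inv \<sigma> j - d) [0..<n])) ` terms n = {0..<n - d}"
    (is "(\<lambda>t. eval t ?g) ` _ = _")
proof (intro equalityI subsetI)
  fix v assume "v \<in> (\<lambda>t. eval t ?g) ` terms n"
  then obtain t where t: "t \<in> terms n" "v = eval t ?g" by blast
  then have "t \<noteq> {#}" by (simp add: terms_def)
  then obtain j where "j \<in># t" "eval t ?g = ?g ! j" by (rule eval_attained)
  moreover have "j < n" using \<open>j \<in># t\<close> t(1) by (auto simp: terms_def)
  moreover have "inv \<sigma> j < n"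
    using permutes_in_image[OF permutes_inv[OF \<sigma>]] \<open>j < n\<close> by simp
  ultimately show "v \<in> {0..<n - d}" using t(2) \<open>d < n\<close> by simp
next
  fix v assume "v \<in> {0..<n - d}"
  then have "\<sigma> (v + d) < n"
    using permutes_in_image[OF \<sigma>] by simp
  then have "{#\<sigma> (v + d)#} \<in> terms n" "eval {#\<sigma> (v + d)#} ?g = v"
    by (simp_all add: terms_def permutes_inverses[OF \<sigma>])
  then show "v \<in> (\<lambda>t. eval t ?g) ` terms n" by (metis image_eqI)
qed

lemma chain_points_irreducible_Gamma_iso_L:
  assumes "algebraic n l (chain_points n l \<sigma> d)"
    and "\<sigma> permutes {0..<n}" "d < n" "n \<le> l + d"
  shows "irreducible_alg n l (chain_points n l \<sigma> d) \<and> Gamma_iso_L n (chain_points n l \<sigma> d) (n - d)"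
proof -
  note gen = chain_points_generic_point[OF assms(2-4)]
  show ?thesis
    using irreducible_if_generic_point[OF assms(1) gen]
      Gamma_iso_L_if_generic_point[OF gen chain_points_generic_point_values[OF assms(2,3)]] ..
qed

lemma ineq_singletons_solution_iff:
  "(case ineq {#a#} {#b#} of (t, s) \<Rightarrow> eval t P = eval s P) \<longleftrightarrow> P ! a \<le> P ! b"
  by (auto simp: ineq_def min_def)

lemma V_Un_chain_equations:
  "V n l (E \<union> {ineq {#\<sigma> i#} {#\<sigma> (Suc i)#} | i. Q i}) =
     {P \<in> V n l E. \<forall>i. Q i \<longrightarrow> P ! \<sigma> i \<le> P ! \<sigma> (Suc i)}"
proof -
  have "(\<forall>e\<in>{ineq {#\<sigma> i#} {#\<sigma> (Suc i)#} | i. Q i}. case e of (t, s) \<Rightarrow> eval t P = eval s P)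
      \<longleftrightarrow> (\<forall>i. Q i \<longrightarrow> P ! \<sigma> i \<le> P ! \<sigma> (Suc i))" for P
  proof
    assume holds: "\<forall>e\<in>{ineq {#\<sigma> i#} {#\<sigma> (Suc i)#} | i. Q i}. case e of (t, s) \<Rightarrow> eval t P = eval s P"
    show "\<forall>i. Q i \<longrightarrow> P ! \<sigma> i \<le> P ! \<sigma> (Suc i)"
    proof (intro allI impI)
      fix i assume "Q i"
      then have "ineq {#\<sigma> i#} {#\<sigma> (Suc i)#} \<in> {ineq {#\<sigma> i#} {#\<sigma> (Suc i)#} | i. Q i}"
        by blast
      then have "case ineq {#\<sigma> i#} {#\<sigma> (Suc i)#} of (t, s) \<Rightarrow> eval t P = eval s P"
        by (rule bspec[OF holds])
      then show "P ! \<sigma> i \<le> P ! \<sigma> (Suc i)" by (simp only: ineq_singletons_solution_iff)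
    qed
  next
    assume chain: "\<forall>i. Q i \<longrightarrow> P ! \<sigma> i \<le> P ! \<sigma> (Suc i)"
    show "\<forall>e\<in>{ineq {#\<sigma> i#} {#\<sigma> (Suc i)#} | i. Q i}. case e of (t, s) \<Rightarrow> eval t P = eval s P"
    proof
      fix e assume "e \<in> {ineq {#\<sigma> i#} {#\<sigma> (Suc i)#} | i. Q i}"
      then obtain i where "Q i" "e = ineq {#\<sigma> i#} {#\<sigma> (Suc i)#}" by blast
      then show "case e of (t, s) \<Rightarrow> eval t P = eval s P"
        using chain by (simp only: ineq_singletons_solution_iff)
    qed
  qed
  then show ?thesis
    unfolding V_def ball_Un by (intro set_eqI) (simp only: mem_Collect_eq conj_assoc)
qed

lemma Y_first_eq_chain_points: "Y_first n l \<sigma> = chain_points n l \<sigma> 0"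
proof -
  have "Y_first n l \<sigma> = V n l ({} \<union> {ineq {#\<sigma> i#} {#\<sigma> (Suc i)#} | i. i + 1 < n})"
    unfolding Y_first_def Un_empty_left ..
  also have "\<dots> = {P \<in> V n l {}. \<forall>i. i + 1 < n \<longrightarrow> P ! \<sigma> i \<le> P ! \<sigma> (Suc i)}"
    by (rule V_Un_chain_equations)
  also have "\<dots> = chain_points n l \<sigma> 0"
    by (auto simp: V_def chain_points_def)
  finally show ?thesis .
qed

lemma Y_second_eq_chain_points: "Y_second n l \<sigma> = chain_points n l \<sigma> 1"
proof -
  have "Y_second n l \<sigma> = {P \<in> V n l {({#\<sigma> 0#}, {#\<sigma> 1#})}.
      \<forall>i. 1 \<le> i \<and> i + 1 < n \<longrightarrow> P ! \<sigma> i \<le> P ! \<sigma> (Suc i)}"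
    unfolding Y_second_def by (rule V_Un_chain_equations)
  also have "\<dots> = chain_points n l \<sigma> 1"
    by (auto simp: V_def chain_points_def le_Suc_eq)
  finally show ?thesis .
qed

lemma algebraicI: "S \<subseteq> terms n \<times> terms n \<Longrightarrow> algebraic n l (V n l S)"
  unfolding algebraic_def by blast

lemma chain_equations_in_terms:
  assumes "\<sigma> permutes {0..<n}" and "\<And>i. Q i \<Longrightarrow> i + 1 < n"
  shows "{ineq {#\<sigma> i#} {#\<sigma> (Suc i)#} | i. Q i} \<subseteq> terms n \<times> terms n"
proof
  fix e assume "e \<in> {ineq {#\<sigma> i#} {#\<sigma> (Suc i)#} | i. Q i}"
  then obtain i where "Q i" "e = ineq {#\<sigma> i#} {#\<sigma> (Suc i)#}" by blast
  moreover have "\<sigma> i < n" "\<sigma> (Suc i) < n"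
    using permutes_in_image[OF assms(1)] assms(2)[OF \<open>Q i\<close>] by simp_all
  ultimately show "e \<in> terms n \<times> terms n" by (simp add: ineq_def terms_def)
qed

lemma algebraic_Y_first:
  assumes "\<sigma> permutes {0..<n}"
  shows "algebraic n l (Y_first n l \<sigma>)"
proof -
  have "{ineq {#\<sigma> i#} {#\<sigma> (Suc i)#} | i. i + 1 < n} \<subseteq> terms n \<times> terms n"
    using assms by (rule chain_equations_in_terms)
  then show ?thesis unfolding Y_first_def by (rule algebraicI)
qed

lemma algebraic_Y_second:
  assumes "\<sigma> permutes {0..<n}" "2 \<le> n"
  shows "algebraic n l (Y_second n l \<sigma>)"
proof -
  have "({#\<sigma> 0#}, {#\<sigma> 1#}) \<in> terms n \<times> terms n"
    using permutes_in_image[OF assms(1)] assms(2) by (simp add: terms_def)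
  moreover have "{ineq {#\<sigma> i#} {#\<sigma> (Suc i)#} | i. 1 \<le> i \<and> i + 1 < n} \<subseteq> terms n \<times> terms n"
    using assms(1) by (rule chain_equations_in_terms) simp
  ultimately show ?thesis unfolding Y_second_def by (intro algebraicI Un_least) simp
qed

theorem lemma1:
  fixes n l :: nat and t s :: "nat multiset" and \<sigma> :: "nat \<Rightarrow> nat"
  assumes "1 \<le> n" and "n \<le> l"
    and "t \<in> terms n" and "s \<in> terms n"
    and "Var t \<union> Var s = {0..<n}"
    and "\<sigma> permutes {0..<n}"
  shows "(first_kind (t, s) \<sigma> \<longrightarrow>
            irreducible_alg n l (Y_first n l \<sigma>) \<and> Gamma_iso_L n (Y_first n l \<sigma>) n) \<and>
         (second_kind (t, s) \<sigma> \<longrightarrow>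
            irreducible_alg n l (Y_second n l \<sigma>) \<and> Gamma_iso_L n (Y_second n l \<sigma>) (n - 1))"
proof (rule conjI; rule impI)
  have "algebraic n l (chain_points n l \<sigma> 0)"
    using algebraic_Y_first[OF \<open>\<sigma> permutes {0..<n}\<close>] by (simp only: Y_first_eq_chain_points)
  then have "irreducible_alg n l (chain_points n l \<sigma> 0) \<and> Gamma_iso_L n (chain_points n l \<sigma> 0) (n - 0)"
    using assms by (intro chain_points_irreducible_Gamma_iso_L) simp_all
  then show "irreducible_alg n l (Y_first n l \<sigma>) \<and> Gamma_iso_L n (Y_first n l \<sigma>) n"
    by (simp add: Y_first_eq_chain_points)
next
  assume "second_kind (t, s) \<sigma>"
  then have "\<sigma> 1 < n"
    using \<open>t \<in> terms n\<close> by (auto simp: second_kind_def Var_def terms_def)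
  have "2 \<le> n"
  proof (rule ccontr)
    assume "\<not> 2 \<le> n"
    then have "\<sigma> 1 = 1" by (intro permutes_not_in[OF \<open>\<sigma> permutes {0..<n}\<close>]) simp
    with \<open>\<sigma> 1 < n\<close> \<open>\<not> 2 \<le> n\<close> show False by simp
  qed
  then have "algebraic n l (chain_points n l \<sigma> 1)"
    using algebraic_Y_second[OF \<open>\<sigma> permutes {0..<n}\<close>] by (simp only: Y_second_eq_chain_points)
  then show "irreducible_alg n l (Y_second n l \<sigma>) \<and> Gamma_iso_L n (Y_second n l \<sigma>) (n - 1)"
    unfolding Y_second_eq_chain_points
    using assms \<open>2 \<le> n\<close> by (intro chain_points_irreducible_Gamma_iso_L) simp_all
qed

end
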